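(* Let $V:\mathbb{R}^r\to\mathbb{R}$ satisfy Assumptions A1 and A2 (see context), and let the step size $\delta$ satisfy the step-size condition (S). Let $(\xi_k,\rho_k)_{k\ge0}$ be the underdamped Langevin algorithm with step size $\delta$ started from deterministic $\xi_0,\rho_0\in\mathbb{R}^r$. Then for any fixed $l>0$ there exist constants $C=C(l,\delta)>0$, $\lambda=\lambda(l,\delta)>0$ and an integer $m=m(l)>0$ such that for all $k\ge0$, \[ \mathbb{E}\left(\Vert\xi_{k}\Vert^{2l}+\Vert\rho_{k}\Vert^{2l}\right)\le C\left\{ 1+\left(\Vert\xi_{0}\Vert^{m}+\Vert\rho_{0}\Vert^{m}\right)e^{-\lambda k}\right\}. \]
   Context: Fix integers $r\ge1$ and a constant $\gamma>0$. A map $\phi:\mathbb{R}^a\to\mathbb{R}^b$ has polynomial growth if there are $C>0$ and an integer $m\ge0$ with $\Vert\phi(x)\Vert\le C(1+\Vert x\Vert^m)$ for all $x$; $\mathscr{C}^m_{poly}$ denotes the maps that are $m$ times differentiable such that the map and its derivatives (up to order $m$) have polynomial growth; $\mathscr{C}^\infty_{poly}$ means this holds for all orders. Norms of matrices/tensors are operator norms. Assumption A1: (a) $V(x)\ge0$ for all $x\in\mathbb{R}^r$; (b) $\Vert\nabla^2V(x)\Vert\le\nu$ for some constant $\nu>0$ and all $x$; (c) $V\in\mathscr{C}^\infty_{poly}$. Assumption A2: there exist constants $\alpha>0$ and $0<\beta<1$ such that for all $x\in\mathbb{R}^r$, $\frac12\langle\nabla V(x),x\rangle\ge\beta V(x)+\gamma^2C_\beta\Vert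 x\Vert^2-\alpha$, where $C_\beta=\frac{\beta(2-\beta)}{8(1-\beta)}$. Step-size condition (S): $0<\delta\le\min\{1/\gamma,\ \gamma/(2\nu),\ (D+1-\sqrt{D^2+1})/\gamma\}$ with $D=\gamma^4C_\beta/\nu^2$. Underdamped Langevin algorithm: $\xi_{k+1}=\xi_k+\delta\rho_k$, $\rho_{k+1}=(1-\gamma\delta)\rho_k-\delta\nabla V(\xi_k)+\sqrt{2\gamma\delta}\,\eta_k$, where $\eta_0,\eta_1,\dots$ are i.i.d. $N(0,I_r)$ and $\eta_k$ is independent of $(\xi_j,\rho_j)_{j\le k}$; write $W_k=(\xi_k^{\mathrm T},\rho_k^{\mathrm T})^{\mathrm T}\in\mathbb{R}^{2r}$. *)

theory Defs
  imports "HOL-Probability.Probability"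
begin

definition poly_growth :: "('a::real_normed_vector \<Rightarrow> real) \<Rightarrow> bool" where
  "poly_growth f \<longleftrightarrow> (\<exists>C>0. \<exists>m::nat. \<forall>x. \<bar>f x\<bar> \<le> C * (1 + norm x ^ m))"

text \<open>D m x is the m-th
  Frechet derivative of V at x, viewed as an m-linear form applied to the list of
  m directions; its operator norm is bounded by C(1+|x|^k).\<close>
definition Cinf_poly :: "('a::real_normed_vector \<Rightarrow> real) \<Rightarrow> bool" where
  "Cinf_poly V \<longleftrightarrow> (\<exists>D :: nat \<Rightarrow> 'a \<Rightarrow> 'a list \<Rightarrow> real.
      (\<forall>x. D 0 x [] = V x) \<and>
      (\<forall>m x hs. length hs = m \<longrightarrow>
          ((\<lambda>y. D m y hs) has_derivative (\<lambda>h. D (Suc m) x (h # hs))) (at x)) \<and>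
      (\<forall>m. \<exists>C>0. \<exists>k::nat. \<forall>x hs. length hs = m \<longrightarrow>
          \<bar>D m x hs\<bar> \<le> C * (1 + norm x ^ k) * prod_list (map norm hs)))"

definition C_beta :: "real \<Rightarrow> real" where
  "C_beta \<beta> = \<beta> * (2 - \<beta>) / (8 * (1 - \<beta>))"

definition step_ok :: "real \<Rightarrow> real \<Rightarrow> real \<Rightarrow> real \<Rightarrow> bool" where
  "step_ok \<gamma> \<nu> \<beta> \<delta> \<longleftrightarrow>
     (let D = \<gamma>^4 * C_beta \<beta> / \<nu>^2 in
      0 < \<delta> \<and> \<delta> \<le> 1/\<gamma> \<and> \<delta> \<le> \<gamma> / (2*\<nu>) \<and> \<delta> \<le> (D + 1 - sqrt (D^2 + 1)) / \<gamma>)"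

definition std_gauss_density :: "real^'n \<Rightarrow> real" where
  "std_gauss_density v = (2*pi) powr (- real CARD('n) / 2) * exp (- (norm v ^ 2) / 2)"

primrec ula :: "real \<Rightarrow> real \<Rightarrow> (real^'n \<Rightarrow> real^'n) \<Rightarrow> real^'n \<Rightarrow> real^'n
      \<Rightarrow> (nat \<Rightarrow> 'w \<Rightarrow> real^'n) \<Rightarrow> nat \<Rightarrow> 'w \<Rightarrow> (real^'n) \<times> (real^'n)" where
  "ula \<gamma> \<delta> g x0 p0 \<eta> 0 w = (x0, p0)"
| "ula \<gamma> \<delta> g x0 p0 \<eta> (Suc k) w =
     (let x = fst (ula \<gamma> \<delta> g x0 p0 \<eta> k w); p = snd (ula \<gamma> \<delta> g x0 p0 \<eta> k w) in
      (x + \<delta> *\<^sub>R p,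
       (1 - \<gamma>*\<delta>) *\<^sub>R p - \<delta> *\<^sub>R g x + sqrt (2*\<gamma>*\<delta>) *\<^sub>R \<eta> k w))"

end

theory Submission
  imports Defs
begin

text \<open>The function \<open>L(x, p) = V(x) + |p|\<^sup>2/2 + \<gamma>\<langle>x, p\<rangle>/2 + \<gamma>\<^sup>2|x|\<^sup>2/4\<close> is a Lyapunov
  function for the scheme: under (S) the dissipativity A2 and the descent lemma make one step
  contract it up to noise, \<open>L(next) \<le> q L + b + e|\<eta>|\<^sup>2\<close> with \<open>q < 1\<close>. For even \<open>N\<close>, convexity
  of \<open>t \<mapsto> t\<^sup>N\<close> turns this into \<open>L\<^sub>k\<^sub>+\<^sub>1\<^sup>N \<le> q L\<^sub>k\<^sup>N + (1 - q) Y\<^sub>k\<close> with \<open>Y\<^sub>k\<close> a polynomial in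
  \<open>|\<eta>\<^sub>k|\<^sup>2\<close>, whose Gaussian expectation is finite; iterating in expectation gives
  \<open>E L\<^sub>k\<^sup>N \<le> q\<^sup>k L\<^sub>0\<^sup>N + c\<close>. As \<open>L\<close> dominates \<open>|x|\<^sup>2\<close> and \<open>|p|\<^sup>2\<close> and grows quadratically, the moment
  bound follows with \<open>\<lambda> = -ln q\<close>. Only the marginal laws of the noise enter.\<close>

lemma descent_inequality:
  fixes f :: "'a::real_inner \<Rightarrow> real"
  assumes f: "\<And>x. (f has_derivative (\<lambda>h. g x \<bullet> h)) (at x)"
    and g: "\<And>x. (g has_derivative H x) (at x)"
    and H: "\<And>x. onorm (H x) \<le> \<nu>"
  shows "f (x + h) \<le> f x + g x \<bullet> h + \<nu>/2 * (h \<bullet> h)"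
proof -
  have lip: "norm (g y - g x) \<le> \<nu> * norm (y - x)" for y
    using differentiable_bound[of UNIV g H \<nu> y x] g H by auto
  define \<phi> where "\<phi> t = f (x + t *\<^sub>R h) - t * (g x \<bullet> h) - \<nu>/2 * t^2 * (h \<bullet> h)" for t
  define \<phi>' where "\<phi>' t = g (x + t *\<^sub>R h) \<bullet> h - g x \<bullet> h - \<nu> * t * (h \<bullet> h)" for t
  have "(\<phi> has_real_derivative \<phi>' t) (at t)" for t
  proof -
    have "((\<lambda>t. f (x + t *\<^sub>R h)) has_derivative (\<lambda>s. g (x + t *\<^sub>R h) \<bullet> (s *\<^sub>R h))) (at t)"
      by (rule has_derivative_compose[OF _ f]) (auto intro!: derivative_eq_intros)
    then have "((\<lambda>t. f (x + t *\<^sub>R h)) has_real_derivative g (x + t *\<^sub>R h) \<bullet> h) (at t)"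
      by (simp add: has_field_derivative_def mult.commute[of _ "g (x + t *\<^sub>R h) \<bullet> h"])
    then show ?thesis unfolding \<phi>_def \<phi>'_def
      by (auto intro!: derivative_eq_intros simp: power2_eq_square algebra_simps)
  qed
  then obtain z where z: "0 < z" "z < 1" "\<phi> 1 - \<phi> 0 = \<phi>' z"
    using MVT2[of 0 1 \<phi> \<phi>'] by auto
  have "(g (x + z *\<^sub>R h) - g x) \<bullet> h \<le> norm (g (x + z *\<^sub>R h) - g x) * norm h"
    by (rule norm_cauchy_schwarz)
  also have "\<dots> \<le> \<nu> * norm (z *\<^sub>R h) * norm h"
    using lip[of "x + z *\<^sub>R h"] by (auto intro: mult_right_mono)
  also have "\<dots> = \<nu> * z * (h \<bullet> h)"
    using z by (simp add: power2_norm_eq_inner[symmetric] power2_eq_square)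
  finally have "\<phi>' z \<le> 0" unfolding \<phi>'_def by (simp add: inner_diff_left)
  with z show ?thesis unfolding \<phi>_def by simp
qed

lemma convex_power_step:
  fixes q L Y :: real
  assumes "even N" and "0 < q" "q < 1"
  shows "(q*L + Y)^N \<le> q*L^N + (1-q)*(Y/(1-q))^N"
  using convex_onD[OF convex_power_even[OF assms(1)], of "1-q" L "Y/(1-q)"] assms(2,3)
  by simp

lemma power_sum3_le:
  fixes a b c :: real
  assumes "0 \<le> a" "0 \<le> b" "0 \<le> c"
  shows "(a+b+c)^N \<le> 3^N * (a^N + b^N + c^N)"
proof -
  define M where "M = max a (max b c)"
  have "(a+b+c)^N \<le> (3*M)^N"
    using assms by (intro power_mono) (auto simp: M_def)
  also have "\<dots> \<le> 3^N * (a^N + b^N + c^N)"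
    using assms by (auto simp: M_def max_def power_mult_distrib)
  finally show ?thesis .
qed

lemma powr_le_1_plus_power:
  fixes r l :: real
  assumes "0 \<le> r" "0 < l" "l \<le> real N"
  shows "r powr (2*l) \<le> 1 + r^(2*N)"
proof (cases "r \<le> 1")
  case True
  then have "r powr (2*l) \<le> 1" using assms by (intro powr_le1) auto
  then show ?thesis by (simp add: add_increasing2)
next
  case False
  then have "r powr (2*l) \<le> r powr (2*real N)" using assms by (intro powr_mono) auto
  also have "\<dots> = r^(2*N)" using False by (simp add: powr_realpow[symmetric])
  finally show ?thesis by simp
qed

lemma affine_power_le_exp:
  fixes b e r :: real
  assumes "0 \<le> b" "0 \<le> e" "0 \<le> r"
  shows "(b + e*r)^N \<le> (b + 4*N*e + 1)^N * exp (r/4)"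
proof (cases "N = 0")
  case False
  define B where "B = b + 4*N*e + 1"
  have B: "B > 0" using assms by (simp add: B_def add_nonneg_pos)
  have "e*r \<le> (B/(4*N))*r"
    using assms False by (intro mult_right_mono) (auto simp: B_def field_simps)
  moreover have "b \<le> B" using assms by (simp add: B_def)
  ultimately have "b + e*r \<le> B * (1 + r/(4*N))" by (simp add: field_simps)
  also have "\<dots> \<le> B * exp (r/(4*N))" using B by (intro mult_left_mono) auto
  finally have "(b + e*r)^N \<le> (B * exp (r/(4*N)))^N"
    using assms by (intro power_mono) auto
  also have "\<dots> = B^N * exp (r/4)"
    using False by (simp add: power_mult_distrib exp_of_nat_mult[symmetric])
  finally show ?thesis by (simp add: B_def)
qed (use assms in simp)

lemma constant_plus_decay_le:
  fixes a c K L0 Z r :: real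
  assumes "0 < a" "0 \<le> c" "0 \<le> K" "0 \<le> Z" "0 \<le> r" "r \<le> 1" "L0 \<le> K * (1 + Z)"
  shows "2 + a * (r * L0 + c) \<le> (2 + a*c + a*K) * (1 + Z * r)"
proof -
  have "r * L0 \<le> r * (K * (1 + Z))" using assms by (intro mult_left_mono) auto
  also have "\<dots> \<le> K + K * Z * r" using assms by (simp add: algebra_simps mult_left_le)
  finally have "2 + a * (r * L0 + c) \<le> 2 + a * (K + K * Z * r + c)"
    using assms by (intro add_left_mono mult_left_mono) auto
  moreover have "0 \<le> Z * r * (2 + a*c)" using assms by simp
  moreover have "(2 + a*c + a*K) * (1 + Z * r) = 2 + a * (K + K * Z * r + c) + Z * r * (2 + a*c)"
    by (simp add: algebra_simps)
  ultimately show ?thesis by linarith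
qed

lemma step_size_root_bounds:
  fixes D :: real
  assumes "D > 0"
  defines "t \<equiv> D + 1 - sqrt (D^2 + 1)"
  shows "0 < t" "t < 1" "t / (2*(1-t)) < 2*D/t - 1"
proof -
  have "sqrt (D^2) < sqrt (D^2 + 1)" by (rule real_sqrt_less_mono) simp
  then show t1: "t < 1" using assms by (simp add: t_def)
  have "sqrt (D^2 + 1) < sqrt ((D+1)^2)"
    using assms by (intro real_sqrt_less_mono) (simp add: power2_eq_square algebra_simps)
  then show t0: "0 < t" using assms by (simp add: t_def)
  text \<open>\<open>t\<close> is the smaller root of \<open>t\<^sup>2 - 2(D+1)t + 2D\<close>.\<close>
  have root: "t^2 = 2*(D+1)*t - 2*D"
    unfolding t_def by (simp add: power2_eq_square algebra_simps)
  have "t*t < (2*D - t)*(2*(1-t))"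
    using root assms t0 t1 by (simp add: power2_eq_square algebra_simps)
  then have "(t*t) / (2*t*(1-t)) < ((2*D - t)*(2*(1-t))) / (2*t*(1-t))"
    using t0 t1 by (intro divide_strict_right_mono) auto
  moreover have "t / (2*(1-t)) = (t*t) / (2*t*(1-t))" "2*D/t - 1 = ((2*D - t)*(2*(1-t))) / (2*t*(1-t))"
    using t0 t1 by (simp_all add: field_simps)
  ultimately show "t / (2*(1-t)) < 2*D/t - 1" by simp
qed

lemma C_beta_pos: "0 < \<beta> \<Longrightarrow> \<beta> < 1 \<Longrightarrow> C_beta \<beta> > 0"
  unfolding C_beta_def by simp

lemma drift_momentum_coefficient_pos:
  fixes \<gamma> \<nu> \<delta> \<epsilon> t :: real
  assumes g: "\<gamma> > 0" and d: "0 < \<delta>" "\<gamma>*\<delta> \<le> t" "\<nu>*\<delta> \<le> \<gamma>/2"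
    and t: "0 < t" "t < 1" and ep: "\<epsilon> > t / (2*(1-t))"
  shows "\<gamma>*\<delta>/2 - \<nu>*\<delta>^2/2 - \<gamma>^2*\<delta>^2/4 - \<gamma>^2*\<delta>^2/(8*\<epsilon>) > 0"
proof -
  have "t / (2*(1-t)) > 0" using t by simp
  with ep have ep0: "\<epsilon> > 0" by linarith
  have a1: "\<nu>*\<delta>^2/2 \<le> \<gamma>*\<delta>/4"
    using mult_right_mono[OF d(3), of \<delta>] d(1) by (simp add: power2_eq_square algebra_simps)
  have a2: "\<gamma>^2*\<delta>^2 \<le> t*(\<gamma>*\<delta>)"
    using mult_right_mono[OF d(2), of "\<gamma>*\<delta>"] g d(1) by (simp add: power2_eq_square algebra_simps)
  have a3: "\<gamma>^2*\<delta>^2/(8*\<epsilon>) \<le> t*(\<gamma>*\<delta>)/(8*\<epsilon>)"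
    using a2 ep0 by (intro divide_right_mono) auto
  have "t < 2*\<epsilon>*(1-t)" using ep t by (simp add: field_simps)
  then have "t/(8*\<epsilon>) < (1-t)/4" using ep0 by (simp add: field_simps)
  then have a4: "0 < (\<gamma>*\<delta>) * ((1-t)/4 - t/(8*\<epsilon>))" using g d(1) by simp
  have "(\<gamma>*\<delta>) * ((1-t)/4 - t/(8*\<epsilon>)) = \<gamma>*\<delta>/4 - t*(\<gamma>*\<delta>)/4 - t*(\<gamma>*\<delta>)/(8*\<epsilon>)"
    by (simp add: algebra_simps diff_divide_distrib)
  with a1 a2 a3 a4 show ?thesis by linarith
qed

lemma step_size_drift_parameters:
  assumes g: "\<gamma> > 0" and n: "\<nu> > 0" and b: "0 < \<beta>" "\<beta> < 1" and ok: "step_ok \<gamma> \<nu> \<beta> \<delta>"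
  obtains \<epsilon> \<eta> where "\<epsilon> > 0" "\<eta> > 0"
    "\<gamma>^3*\<delta>*C_beta \<beta> - (1+\<epsilon>)*(1+\<eta>)*\<delta>^2*\<nu>^2/2 > 0"
    "\<gamma>*\<delta>/2 - \<nu>*\<delta>^2/2 - \<gamma>^2*\<delta>^2/4 - \<gamma>^2*\<delta>^2/(8*\<epsilon>) > 0"
proof -
  define D where "D = \<gamma>^4 * C_beta \<beta> / \<nu>^2"
  have D: "D > 0" using g n C_beta_pos[OF b] by (simp add: D_def)
  define t where "t = D + 1 - sqrt (D^2 + 1)"
  have t: "0 < t" "t < 1" "t / (2*(1-t)) < 2*D/t - 1"
    using step_size_root_bounds[OF D] by (simp_all add: t_def)
  have d: "0 < \<delta>" "\<gamma>*\<delta> \<le> t" "\<nu>*\<delta> \<le> \<gamma>/2"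
    using ok g n unfolding step_ok_def Let_def D_def[symmetric] t_def[symmetric]
    by (auto simp: field_simps)
  text \<open>Any \<open>\<epsilon>\<close> strictly between the two bounds works; \<open>\<eta>\<close> is then chosen with
    \<open>(1+\<epsilon>)(1+\<eta>)t\<close> halfway between \<open>(1+\<epsilon>)t\<close> and \<open>2D\<close>.\<close>
  define e0 where "e0 = t / (2*(1-t))"
  define e1 where "e1 = 2*D/t - 1"
  define \<epsilon> where "\<epsilon> = (e0 + e1) / 2"
  have ep: "\<epsilon> > t / (2*(1-t))" "\<epsilon> < 2*D/t - 1"
    using t(3) unfolding \<epsilon>_def e0_def[symmetric] e1_def[symmetric] by auto
  have "t / (2*(1-t)) > 0" using t by simp
  with ep have ep0: "\<epsilon> > 0" by linarith
  have et: "(1+\<epsilon>)*t < 2*D" using ep(2) t by (simp add: field_simps)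
  define \<eta> where "\<eta> = (2*D/((1+\<epsilon>)*t) - 1)/2"
  have pos: "(1+\<epsilon>)*t > 0" using ep0 t by simp
  have eta0: "\<eta> > 0" using et pos by (simp add: \<eta>_def less_divide_eq)
  have eta2: "(1+\<epsilon>)*(1+\<eta>)*t < 2*D"
  proof -
    have "(1+\<epsilon>)*(1+\<eta>)*t = (2*D + (1+\<epsilon>)*t)/2"
      using pos unfolding \<eta>_def by (simp add: field_simps)
    then show ?thesis using et by simp
  qed
  have "\<gamma>^3*\<delta>*C_beta \<beta> - (1+\<epsilon>)*(1+\<eta>)*\<delta>^2*\<nu>^2/2 > 0"
  proof -
    have "(1+\<epsilon>)*(1+\<eta>)*(\<gamma>*\<delta>) \<le> (1+\<epsilon>)*(1+\<eta>)*t"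
      using d ep0 eta0 by (intro mult_left_mono) auto
    also have "\<dots> < 2*D" by (rule eta2)
    finally have "(1+\<epsilon>)*(1+\<eta>)*(\<gamma>*\<delta>) < 2*D" .
    then have "\<gamma> * ((1+\<epsilon>)*(1+\<eta>)*\<delta>*\<nu>^2/2) < \<gamma> * (\<gamma>^3*C_beta \<beta>)"
      using n by (simp add: D_def field_simps power_numeral_reduce)
    then have "(1+\<epsilon>)*(1+\<eta>)*\<delta>*\<nu>^2/2 < \<gamma>^3*C_beta \<beta>"
      using g by (simp only: mult_less_cancel_left_pos)
    from mult_strict_left_mono[OF this d(1)] show ?thesis
      by (simp add: algebra_simps power2_eq_square)
  qed
  moreover have "\<gamma>*\<delta>/2 - \<nu>*\<delta>^2/2 - \<gamma>^2*\<delta>^2/4 - \<gamma>^2*\<delta>^2/(8*\<epsilon>) > 0"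
    using drift_momentum_coefficient_pos[OF g d t(1,2) ep(1)] .
  ultimately show ?thesis using that ep0 eta0 by blast
qed

definition lyapunov :: "('a::real_inner \<Rightarrow> real) \<Rightarrow> real \<Rightarrow> 'a \<Rightarrow> 'a \<Rightarrow> real" where
  "lyapunov V \<gamma> x p = V x + 1/2*(p \<bullet> p) + \<gamma>/2*(x \<bullet> p) + \<gamma>^2/4*(x \<bullet> x)"

lemma lyapunov_eq_squares:
  "lyapunov V \<gamma> x p = V x + 1/2*((p + (\<gamma>/2) *\<^sub>R x) \<bullet> (p + (\<gamma>/2) *\<^sub>R x)) + \<gamma>^2/8*(x \<bullet> x)"
  unfolding lyapunov_def
  by (simp add: inner_add_left inner_add_right inner_commute power2_eq_square algebra_simps)

context
  fixes V :: "'a::real_inner \<Rightarrow> real"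
  assumes V_nonneg: "\<And>x. V x \<ge> 0"
begin

lemma lyapunov_nonneg: "0 \<le> lyapunov V \<gamma> x p"
  unfolding lyapunov_eq_squares using V_nonneg[of x] by simp

lemma inner_position_le_lyapunov:
  assumes "\<gamma> > 0"
  shows "x \<bullet> x \<le> 8/\<gamma>^2 * lyapunov V \<gamma> x p"
proof -
  have "\<gamma>^2/8 * (x \<bullet> x) \<le> lyapunov V \<gamma> x p"
    unfolding lyapunov_eq_squares using V_nonneg[of x] by simp
  then show ?thesis using assms by (simp add: field_simps)
qed

lemma inner_momentum_le_lyapunov: "p \<bullet> p \<le> 4 * lyapunov V \<gamma> x p"
proof -
  define w where "w = p + (\<gamma>/2) *\<^sub>R x"
  define v where "v = (\<gamma>/2) *\<^sub>R x"
  have "p \<bullet> p + (w + v) \<bullet> (w + v) = 2*(w \<bullet> w) + 2*(v \<bullet> v)"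
    by (simp add: w_def v_def inner_add_left inner_add_right inner_commute)
  moreover have "0 \<le> (w + v) \<bullet> (w + v)" by simp
  moreover have "v \<bullet> v = \<gamma>^2/4 * (x \<bullet> x)" by (simp add: v_def power2_eq_square)
  moreover have "lyapunov V \<gamma> x p = V x + 1/2*(w \<bullet> w) + \<gamma>^2/8*(x \<bullet> x)"
    by (simp add: lyapunov_eq_squares w_def)
  ultimately show ?thesis using V_nonneg[of x] by linarith
qed

text \<open>The cross term of the noise is absorbed by Young's inequality into the factor \<open>1 + \<theta>\<close>.\<close>
lemma lyapunov_add_noise_le:
  assumes "\<theta> > 0"
  shows "lyapunov V \<gamma> y (u + s *\<^sub>R z)
    \<le> (1 + \<theta>) * lyapunov V \<gamma> y u + s^2/2 * (1 + 1/\<theta>) * (z \<bullet> z)"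
proof -
  define w where "w = u + (\<gamma>/2) *\<^sub>R y"
  have expand: "lyapunov V \<gamma> y (u + s *\<^sub>R z)
      = lyapunov V \<gamma> y u + s*(w \<bullet> z) + s^2/2*(z \<bullet> z)"
    unfolding lyapunov_def w_def
    by (simp add: inner_add_left inner_add_right inner_commute power2_eq_square algebra_simps)
  have "1/2*(w \<bullet> w) \<le> lyapunov V \<gamma> y u"
    unfolding lyapunov_eq_squares w_def using V_nonneg[of y] by simp
  then have w: "\<theta>/2*(w \<bullet> w) \<le> \<theta> * lyapunov V \<gamma> y u"
    using mult_left_mono[of _ _ \<theta>] assms by fastforce
  have "0 \<le> (\<theta> *\<^sub>R w - s *\<^sub>R z) \<bullet> (\<theta> *\<^sub>R w - s *\<^sub>R z)" by simp
  then have "(2*\<theta>)*(s*(w \<bullet> z)) \<le> (2*\<theta>)*(\<theta>/2*(w \<bullet> w) + s^2/(2*\<theta>)*(z \<bullet> z))"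
    using assms
    by (simp add: inner_diff_left inner_diff_right inner_commute power2_eq_square algebra_simps)
  then have "s*(w \<bullet> z) \<le> \<theta>/2*(w \<bullet> w) + s^2/(2*\<theta>)*(z \<bullet> z)"
    using assms by (simp add: mult_le_cancel_left_pos)
  with w have "s*(w \<bullet> z) \<le> \<theta> * lyapunov V \<gamma> y u + s^2/(2*\<theta>)*(z \<bullet> z)"
    by linarith
  moreover have "(1 + \<theta>) * lyapunov V \<gamma> y u + s^2/2 * (1 + 1/\<theta>) * (z \<bullet> z)
      = lyapunov V \<gamma> y u + \<theta> * lyapunov V \<gamma> y u + s^2/(2*\<theta>)*(z \<bullet> z) + s^2/2*(z \<bullet> z)"
    using assms by (simp add: field_simps)
  ultimately show ?thesis
    unfolding expand by linarith
qed

lemma power_norms_le_lyapunov_power: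
  assumes "\<gamma> > 0" "0 < l" "l \<le> real N"
  shows "norm x powr (2*l) + norm p powr (2*l)
    \<le> 2 + 2 * max (8/\<gamma>^2) 4 ^ N * lyapunov V \<gamma> x p ^ N"
proof -
  define a where "a = max (8/\<gamma>^2) 4"
  have L: "0 \<le> lyapunov V \<gamma> x p" by (rule lyapunov_nonneg)
  have "x \<bullet> x \<le> 8/\<gamma>^2 * lyapunov V \<gamma> x p"
    by (rule inner_position_le_lyapunov[OF assms(1)])
  also have "\<dots> \<le> a * lyapunov V \<gamma> x p"
    unfolding a_def using L by (intro mult_right_mono) auto
  finally have "x \<bullet> x \<le> a * lyapunov V \<gamma> x p" .
  then have "(x \<bullet> x)^N \<le> (a * lyapunov V \<gamma> x p)^N" by (intro power_mono) auto
  then have nx: "norm x ^ (2*N) \<le> a^N * lyapunov V \<gamma> x p ^ N"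
    by (simp only: power_mult power2_norm_eq_inner power_mult_distrib)
  have "p \<bullet> p \<le> 4 * lyapunov V \<gamma> x p"
    by (rule inner_momentum_le_lyapunov)
  also have "\<dots> \<le> a * lyapunov V \<gamma> x p"
    unfolding a_def using L by (intro mult_right_mono) auto
  finally have "p \<bullet> p \<le> a * lyapunov V \<gamma> x p" .
  then have "(p \<bullet> p)^N \<le> (a * lyapunov V \<gamma> x p)^N" by (intro power_mono) auto
  then have np: "norm p ^ (2*N) \<le> a^N * lyapunov V \<gamma> x p ^ N"
    by (simp only: power_mult power2_norm_eq_inner power_mult_distrib)
  have "norm x powr (2*l) + norm p powr (2*l) \<le> (1 + norm x ^ (2*N)) + (1 + norm p ^ (2*N))"
    using assms by (intro add_mono powr_le_1_plus_power) auto
  with nx np show ?thesis unfolding a_def by simp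
qed

end

locale langevin_potential =
  fixes V :: "'a::real_inner \<Rightarrow> real" and gradV :: "'a \<Rightarrow> 'a" and H :: "'a \<Rightarrow> 'a \<Rightarrow> 'a"
    and \<gamma> \<nu> \<alpha> \<beta> :: real
  assumes gamma_pos: "\<gamma> > 0"
    and grad: "\<And>x. (V has_derivative (\<lambda>h. gradV x \<bullet> h)) (at x)"
    and hess: "\<And>x. (gradV has_derivative H x) (at x)"
    and V_nonneg: "\<And>x. V x \<ge> 0"
    and nu_pos: "\<nu> > 0"
    and hess_bound: "\<And>x. onorm (H x) \<le> \<nu>"
    and beta: "0 < \<beta>" "\<beta> < 1"
    and dissipative: "\<And>x. (1/2) * (gradV x \<bullet> x) \<ge> \<beta> * V x + \<gamma>^2 * C_beta \<beta> * (norm x)^2 - \<alpha>"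
begin

lemmas descent = descent_inequality[OF grad hess hess_bound]

lemma norm_gradV_le: "norm (gradV x) \<le> norm (gradV 0) + \<nu> * norm x"
  using differentiable_bound[of UNIV gradV H \<nu> x 0] hess hess_bound
    norm_triangle_ineq2[of "gradV x" "gradV 0"]
  by auto

lemma lyapunov_le_quadratic:
  obtains K where "K \<ge> 0" "\<And>x p. lyapunov V \<gamma> x p \<le> K * (1 + x \<bullet> x + p \<bullet> p)"
proof
  define g0 where "g0 = norm (gradV 0)"
  define K where "K = V 0 + g0^2/2 + 1 + \<nu>/2 + \<gamma>^2"
  show "K \<ge> 0" using V_nonneg[of 0] nu_pos by (simp add: K_def)
  fix x p
  have "V x \<le> V 0 + g0 * norm x + \<nu>/2 * (x \<bullet> x)"
    using descent[of 0 x] norm_cauchy_schwarz[of "gradV 0" x] by (simp add: g0_def)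
  moreover have "g0 * norm x \<le> g0^2/2 + (x \<bullet> x)/2"
    using sum_squares_bound[of g0 "norm x"] by (simp add: power2_norm_eq_inner)
  moreover have "\<gamma>*(x \<bullet> p) \<le> p \<bullet> p + \<gamma>^2/4*(x \<bullet> x)"
  proof -
    have "0 \<le> (p - (\<gamma>/2) *\<^sub>R x) \<bullet> (p - (\<gamma>/2) *\<^sub>R x)" by simp
    then show ?thesis
      by (simp add: inner_diff_left inner_diff_right inner_commute power2_eq_square algebra_simps)
  qed
  moreover have "K * (1 + x \<bullet> x + p \<bullet> p) = K + V 0*(x \<bullet> x) + g0^2/2*(x \<bullet> x) + (x \<bullet> x)
      + \<nu>/2*(x \<bullet> x) + \<gamma>^2*(x \<bullet> x) + K*(p \<bullet> p)"
    by (simp add: K_def algebra_simps)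
  moreover have "1 \<le> K" using V_nonneg[of 0] nu_pos by (simp add: K_def)
  then have "p \<bullet> p \<le> K*(p \<bullet> p)" using mult_right_mono[of 1 K "p \<bullet> p"] by simp
  moreover have "0 \<le> V 0*(x \<bullet> x)" "0 \<le> g0^2/2*(x \<bullet> x)" "0 \<le> \<gamma>^2*(x \<bullet> x)" "0 \<le> x \<bullet> x"
    using V_nonneg[of 0] by simp_all
  moreover have "V 0 + g0^2/2 \<le> K" using nu_pos by (simp add: K_def add_nonneg_nonneg)
  ultimately show "lyapunov V \<gamma> x p \<le> K * (1 + x \<bullet> x + p \<bullet> p)"
    unfolding lyapunov_def by linarith
qed

lemma inner_gradV_le:
  assumes "\<eta> > 0"
  shows "gradV x \<bullet> gradV x \<le> (1+\<eta>)*\<nu>^2*(x \<bullet> x) + (1+1/\<eta>)*(norm (gradV 0))^2"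
proof -
  have "gradV x \<bullet> gradV x \<le> (norm (gradV 0) + \<nu> * norm x)^2"
    using norm_gradV_le[of x] by (simp add: power_mono flip: power2_norm_eq_inner)
  also have "\<dots> \<le> (1+\<eta>)*\<nu>^2*(x \<bullet> x) + (1+1/\<eta>)*(norm (gradV 0))^2"
  proof -
    have "0 \<le> (\<eta> * (\<nu> * norm x) - norm (gradV 0))^2" by simp
    then have "2*(\<nu> * norm x)*norm (gradV 0) \<le> \<eta>*(\<nu> * norm x)^2 + (1/\<eta>)*(norm (gradV 0))^2"
      using assms by (simp add: field_simps power2_eq_square)
    then show ?thesis
      by (simp add: power2_eq_square algebra_simps flip: power2_norm_eq_inner)
  qed
  finally show ?thesis .
qed

lemma lyapunov_drift:
  assumes d: "\<delta> > 0" and e: "\<epsilon> > 0" and et: "\<eta> > 0"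
  shows "lyapunov V \<gamma> (x + \<delta> *\<^sub>R p) ((1 - \<gamma>*\<delta>) *\<^sub>R p - \<delta> *\<^sub>R gradV x) \<le> lyapunov V \<gamma> x p
     - (\<gamma>^3*\<delta>*C_beta \<beta> - (1+\<epsilon>)*(1+\<eta>)*\<delta>^2*\<nu>^2/2) * (x \<bullet> x)
     - (\<gamma>*\<delta>/2 - \<nu>*\<delta>^2/2 - \<gamma>^2*\<delta>^2/4 - \<gamma>^2*\<delta>^2/(8*\<epsilon>)) * (p \<bullet> p)
     + (\<gamma>*\<delta>*\<alpha> + (1+\<epsilon>)*(1+1/\<eta>)*\<delta>^2*(norm (gradV 0))^2/2)"
proof -
  define G where "G = gradV x \<bullet> gradV x"
  define P where "P = p \<bullet> p"
  define X where "X = x \<bullet> x"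
  define gp where "gp = gradV x \<bullet> p"
  define gx where "gx = gradV x \<bullet> x"
  define G0 where "G0 = (norm (gradV 0))^2"
  define Cb where "Cb = C_beta \<beta>"
  have expand: "lyapunov V \<gamma> (x + \<delta> *\<^sub>R p) ((1 - \<gamma>*\<delta>) *\<^sub>R p - \<delta> *\<^sub>R gradV x) =
    V (x + \<delta> *\<^sub>R p) + 1/2*P + \<gamma>/2*(x \<bullet> p) + \<gamma>^2/4*X
    + (-\<gamma>*\<delta>/2 + \<gamma>^2*\<delta>^2/4)*P - \<gamma>*\<delta>/2*gx + \<delta>^2/2*G + (-\<delta> + \<gamma>*\<delta>^2/2)*gp"
    unfolding lyapunov_def P_def X_def gx_def G_def gp_def
    by (simp add: inner_add_left inner_add_right inner_diff_left inner_diff_right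
       inner_commute power2_eq_square algebra_simps)
  have L: "lyapunov V \<gamma> x p = V x + 1/2*P + \<gamma>/2*(x \<bullet> p) + \<gamma>^2/4*X"
    by (simp add: lyapunov_def P_def X_def)
  have h1: "V (x + \<delta> *\<^sub>R p) \<le> V x + \<delta> * gp + \<nu>/2*\<delta>^2 * P"
    using descent[of x "\<delta> *\<^sub>R p"] by (simp add: gp_def P_def power2_eq_square)
  have "\<beta> * V x \<ge> 0" using beta V_nonneg[of x] by simp
  then have "gx \<ge> 2*\<gamma>^2*Cb*X - 2*\<alpha>"
    using dissipative[of x] unfolding gx_def X_def Cb_def power2_norm_eq_inner by linarith
  from mult_left_mono[OF this, of "\<gamma>*\<delta>/2"] gamma_pos d
  have h2: "\<gamma>*\<delta>/2 * gx \<ge> \<gamma>^3*\<delta>*Cb * X - \<gamma>*\<delta>*\<alpha>"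
    by (simp add: algebra_simps power3_eq_cube power2_eq_square)
  have "0 \<le> ((2*\<epsilon>) *\<^sub>R gradV x - \<gamma> *\<^sub>R p) \<bullet> ((2*\<epsilon>) *\<^sub>R gradV x - \<gamma> *\<^sub>R p)" by simp
  then have "\<gamma>*gp \<le> \<epsilon>*G + \<gamma>^2/(4*\<epsilon>)*P"
    using e unfolding gp_def G_def P_def
    by (simp add: inner_diff_left inner_diff_right inner_commute power2_eq_square field_simps)
  from mult_left_mono[OF this, of "\<delta>^2/2"]
  have h3: "\<gamma>*\<delta>^2/2 * gp \<le> \<epsilon>*\<delta>^2/2 * G + \<gamma>^2*\<delta>^2/(8*\<epsilon>) * P"
    by (simp add: field_simps)
  have "G \<le> (1+\<eta>)*\<nu>^2*X + (1+1/\<eta>)*G0"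
    using inner_gradV_le[OF et] by (simp add: G_def X_def G0_def)
  then have h4: "(1+\<epsilon>)*\<delta>^2/2 * G \<le> (1+\<epsilon>)*\<delta>^2/2 * ((1+\<eta>)*\<nu>^2*X + (1+1/\<eta>)*G0)"
    using e by (intro mult_left_mono) auto
  text \<open>The claimed bound minus the left-hand side is the sum of the slacks of \<open>h1\<close>--\<open>h4\<close>.\<close>
  have "(lyapunov V \<gamma> x p - (\<gamma>^3*\<delta>*Cb - (1+\<epsilon>)*(1+\<eta>)*\<delta>^2*\<nu>^2/2) * X
     - (\<gamma>*\<delta>/2 - \<nu>*\<delta>^2/2 - \<gamma>^2*\<delta>^2/4 - \<gamma>^2*\<delta>^2/(8*\<epsilon>)) * P
     + (\<gamma>*\<delta>*\<alpha> + (1+\<epsilon>)*(1+1/\<eta>)*\<delta>^2*G0/2))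
     - lyapunov V \<gamma> (x + \<delta> *\<^sub>R p) ((1 - \<gamma>*\<delta>) *\<^sub>R p - \<delta> *\<^sub>R gradV x)
   = (V x + \<delta>*gp + \<nu>/2*\<delta>^2*P - V (x + \<delta> *\<^sub>R p))
     + (\<gamma>*\<delta>/2*gx - (\<gamma>^3*\<delta>*Cb*X - \<gamma>*\<delta>*\<alpha>))
     + (\<epsilon>*\<delta>^2/2*G + \<gamma>^2*\<delta>^2/(8*\<epsilon>)*P - \<gamma>*\<delta>^2/2*gp)
     + ((1+\<epsilon>)*\<delta>^2/2*((1+\<eta>)*\<nu>^2*X + (1+1/\<eta>)*G0) - (1+\<epsilon>)*\<delta>^2/2*G)"
    unfolding expand L by (simp add: algebra_simps add_divide_distrib diff_divide_distrib)
  with h1 h2 h3 h4 show ?thesis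
    unfolding P_def[symmetric] X_def[symmetric] G0_def[symmetric] Cb_def[symmetric] by linarith
qed

lemma lyapunov_drift_contraction:
  assumes ok: "step_ok \<gamma> \<nu> \<beta> \<delta>"
  obtains \<kappa> A where "0 < \<kappa>" "\<kappa> \<le> 1/2" "0 \<le> A"
    "\<And>x p. lyapunov V \<gamma> (x + \<delta> *\<^sub>R p) ((1 - \<gamma>*\<delta>) *\<^sub>R p - \<delta> *\<^sub>R gradV x)
       \<le> (1 - \<kappa>) * lyapunov V \<gamma> x p + A"
proof -
  have d: "\<delta> > 0" using ok unfolding step_ok_def Let_def by auto
  obtain \<epsilon> \<eta> where ep: "\<epsilon> > 0" "\<eta> > 0"
    and C1: "\<gamma>^3*\<delta>*C_beta \<beta> - (1+\<epsilon>)*(1+\<eta>)*\<delta>^2*\<nu>^2/2 > 0" (is "?C1 > 0")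
    and C2: "\<gamma>*\<delta>/2 - \<nu>*\<delta>^2/2 - \<gamma>^2*\<delta>^2/4 - \<gamma>^2*\<delta>^2/(8*\<epsilon>) > 0" (is "?C2 > 0")
    using step_size_drift_parameters[OF gamma_pos nu_pos beta ok] by blast
  define C3 where "C3 = \<gamma>*\<delta>*\<alpha> + (1+\<epsilon>)*(1+1/\<eta>)*\<delta>^2*(norm (gradV 0))^2/2"
  obtain K where K: "K \<ge> 0" "\<And>x p. lyapunov V \<gamma> x p \<le> K * (1 + x \<bullet> x + p \<bullet> p)"
    using lyapunov_le_quadratic by blast
  text \<open>The drift removes \<open>min C1 C2 (x \<bullet> x + p \<bullet> p)\<close>, which dominates \<open>\<kappa> (L - K)\<close>.\<close>
  define cm where "cm = min ?C1 ?C2"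
  have cm: "0 < cm" "cm \<le> ?C1" "cm \<le> ?C2" using C1 C2 by (auto simp: cm_def)
  define \<kappa> where "\<kappa> = min (cm / (K + 1)) (1/2)"
  have "\<kappa> \<le> 1/2" unfolding \<kappa>_def by (rule min.cobounded2)
  moreover have "0 < \<kappa>" using cm K unfolding \<kappa>_def by (simp add: add_nonneg_pos)
  moreover have "\<kappa> * K \<le> cm / (K + 1) * (K + 1)"
    using K \<open>0 < \<kappa>\<close> by (intro mult_mono) (auto simp: \<kappa>_def)
  then have kaK: "\<kappa> * K \<le> ?C1" "\<kappa> * K \<le> ?C2" using K cm by auto
  moreover have "0 \<le> \<kappa> * K + \<bar>C3\<bar>" using K \<open>0 < \<kappa>\<close> by simp
  moreover have "lyapunov V \<gamma> (x + \<delta> *\<^sub>R p) ((1 - \<gamma>*\<delta>) *\<^sub>R p - \<delta> *\<^sub>R gradV x)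
       \<le> (1 - \<kappa>) * lyapunov V \<gamma> x p + (\<kappa> * K + \<bar>C3\<bar>)" for x p
  proof -
    have "\<kappa> * K * (x \<bullet> x) \<le> ?C1 * (x \<bullet> x)" "\<kappa> * K * (p \<bullet> p) \<le> ?C2 * (p \<bullet> p)"
      using kaK by (simp_all add: mult_right_mono)
    moreover have "\<kappa> * lyapunov V \<gamma> x p \<le> \<kappa> * (K * (1 + x \<bullet> x + p \<bullet> p))"
      using K(2)[of x p] \<open>0 < \<kappa>\<close> by (intro mult_left_mono) auto
    ultimately show ?thesis
      using lyapunov_drift[OF d ep, of x p] unfolding C3_def[symmetric] by (simp add: algebra_simps)
  qed
  ultimately show thesis using that by blast
qed

lemma lyapunov_step_contraction:
  assumes ok: "step_ok \<gamma> \<nu> \<beta> \<delta>"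
  obtains q b e where "0 < q" "q < 1" "0 \<le> b" "0 \<le> e"
    "\<And>x p z. lyapunov V \<gamma> (x + \<delta> *\<^sub>R p) ((1 - \<gamma>*\<delta>) *\<^sub>R p - \<delta> *\<^sub>R gradV x + s *\<^sub>R z)
       \<le> q * lyapunov V \<gamma> x p + b + e * (z \<bullet> z)"
proof -
  obtain \<kappa> A where ka: "0 < \<kappa>" "\<kappa> \<le> 1/2" "0 \<le> A"
    and drift: "\<And>x p. lyapunov V \<gamma> (x + \<delta> *\<^sub>R p) ((1 - \<gamma>*\<delta>) *\<^sub>R p - \<delta> *\<^sub>R gradV x)
       \<le> (1 - \<kappa>) * lyapunov V \<gamma> x p + A"
    using lyapunov_drift_contraction[OF ok] by blast
  define \<theta> where "\<theta> = \<kappa>/2"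
  show thesis
  proof
    show "0 < (1+\<theta>)*(1-\<kappa>)" using ka by (simp add: \<theta>_def)
    have "(1+\<theta>)*(1-\<kappa>) = 1 - \<kappa>/2 - \<kappa>^2/2"
      by (simp add: \<theta>_def field_simps power2_eq_square)
    moreover have "0 \<le> \<kappa>^2" by simp
    ultimately show "(1+\<theta>)*(1-\<kappa>) < 1" using ka by linarith
    show "0 \<le> (1+\<theta>)*A" using ka by (simp add: \<theta>_def)
    show "0 \<le> s^2/2 * (1 + 1/\<theta>)" using ka by (simp add: \<theta>_def)
  next
    fix x p z :: 'a
    define y where "y = x + \<delta> *\<^sub>R p"
    define u where "u = (1 - \<gamma>*\<delta>) *\<^sub>R p - \<delta> *\<^sub>R gradV x"
    have "lyapunov V \<gamma> y (u + s *\<^sub>R z)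
        \<le> (1 + \<theta>) * lyapunov V \<gamma> y u + s^2/2 * (1 + 1/\<theta>) * (z \<bullet> z)"
      by (rule lyapunov_add_noise_le[where V=V, OF V_nonneg]) (use ka in \<open>simp add: \<theta>_def\<close>)
    moreover have "(1 + \<theta>) * lyapunov V \<gamma> y u \<le> (1 + \<theta>) * ((1-\<kappa>) * lyapunov V \<gamma> x p + A)"
      using drift[of x p] ka unfolding y_def u_def by (intro mult_left_mono) (auto simp: \<theta>_def)
    ultimately show "lyapunov V \<gamma> (x + \<delta> *\<^sub>R p) ((1 - \<gamma>*\<delta>) *\<^sub>R p - \<delta> *\<^sub>R gradV x + s *\<^sub>R z)
        \<le> (1+\<theta>)*(1-\<kappa>) * lyapunov V \<gamma> x p + (1+\<theta>)*A + s^2/2 * (1 + 1/\<theta>) * (z \<bullet> z)"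
      unfolding y_def u_def by (simp add: algebra_simps)
  qed
qed

lemma lyapunov_power_step:
  assumes ok: "step_ok \<gamma> \<nu> \<beta> \<delta>" and N: "even N"
  obtains q b e where "0 < q" "q < 1" "0 \<le> b" "0 \<le> e"
    "\<And>x p z. lyapunov V \<gamma> (x + \<delta> *\<^sub>R p) ((1 - \<gamma>*\<delta>) *\<^sub>R p - \<delta> *\<^sub>R gradV x + s *\<^sub>R z) ^ N
       \<le> q * lyapunov V \<gamma> x p ^ N + (1-q) * (b + e * (z \<bullet> z))^N"
proof -
  obtain q b e where q: "0 < q" "q < 1" and be: "0 \<le> b" "0 \<le> e"
    and contract: "\<And>x p z. lyapunov V \<gamma> (x + \<delta> *\<^sub>R p) ((1 - \<gamma>*\<delta>) *\<^sub>R p - \<delta> *\<^sub>R gradV x + s *\<^sub>R z)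
       \<le> q * lyapunov V \<gamma> x p + b + e * (z \<bullet> z)"
    using lyapunov_step_contraction[OF ok] by blast
  show thesis
  proof (rule that[OF q, of "b/(1-q)" "e/(1-q)"])
    show "0 \<le> b/(1-q)" "0 \<le> e/(1-q)" using q be by simp_all
  next
    fix x p z :: 'a
    have "lyapunov V \<gamma> (x + \<delta> *\<^sub>R p) ((1 - \<gamma>*\<delta>) *\<^sub>R p - \<delta> *\<^sub>R gradV x + s *\<^sub>R z) ^ N
        \<le> (q * lyapunov V \<gamma> x p + (b + e * (z \<bullet> z)))^N"
      using contract[of x p z] lyapunov_nonneg[where V=V, OF V_nonneg]
      by (intro power_mono) (auto simp: add.assoc)
    also have "\<dots> \<le> q * lyapunov V \<gamma> x p ^ N + (1-q) * ((b + e * (z \<bullet> z))/(1-q))^N"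
      by (rule convex_power_step[OF N q])
    finally show "lyapunov V \<gamma> (x + \<delta> *\<^sub>R p) ((1 - \<gamma>*\<delta>) *\<^sub>R p - \<delta> *\<^sub>R gradV x + s *\<^sub>R z) ^ N
        \<le> q * lyapunov V \<gamma> x p ^ N + (1-q) * (b/(1-q) + e/(1-q) * (z \<bullet> z))^N"
      by (simp add: add_divide_distrib)
  qed
qed

lemma gradV_continuous: "continuous_on UNIV gradV"
  using hess by (intro continuous_at_imp_continuous_on) (auto intro: has_derivative_continuous)

lemma V_continuous: "continuous_on UNIV V"
  using grad by (intro continuous_at_imp_continuous_on) (auto intro: has_derivative_continuous)

lemma lyapunov_power_le:
  obtains K where "K \<ge> 0" "\<And>x p. lyapunov V \<gamma> x p ^ N \<le> K * (1 + norm x ^ (2*N) + norm p ^ (2*N))"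
proof -
  obtain K where K: "K \<ge> 0" "\<And>x p. lyapunov V \<gamma> x p \<le> K * (1 + x \<bullet> x + p \<bullet> p)"
    using lyapunov_le_quadratic by blast
  show thesis
  proof (rule that[of "(3*K)^N"])
    fix x p
    have "lyapunov V \<gamma> x p ^ N \<le> (K * (1 + x \<bullet> x + p \<bullet> p))^N"
      using K(2) lyapunov_nonneg[where V=V, OF V_nonneg] by (intro power_mono)
    also have "\<dots> = K^N * (1 + x \<bullet> x + p \<bullet> p)^N" by (rule power_mult_distrib)
    also have "\<dots> \<le> K^N * (3^N * (1^N + (x \<bullet> x)^N + (p \<bullet> p)^N))"
      using K(1) by (intro mult_left_mono power_sum3_le) auto
    finally have "lyapunov V \<gamma> x p ^ N \<le> K^N * (3^N * (1^N + (x \<bullet> x)^N + (p \<bullet> p)^N))" .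
    moreover have "(x \<bullet> x)^N = norm x ^ (2*N)" "(p \<bullet> p)^N = norm p ^ (2*N)"
      by (simp_all only: power_mult power2_norm_eq_inner)
    ultimately show "lyapunov V \<gamma> x p ^ N \<le> (3*K)^N * (1 + norm x ^ (2*N) + norm p ^ (2*N))"
      by (simp add: power_mult_distrib mult_ac)
  qed (use K in simp)
qed

end

lemma nn_integral_convex_recursion_le:
  fixes X Y :: "nat \<Rightarrow> 'w \<Rightarrow> real"
  assumes X: "\<And>k. X k \<in> borel_measurable M" and Y: "\<And>k. Y k \<in> borel_measurable M"
    and nonneg: "\<And>k w. 0 \<le> X k w" "\<And>k w. 0 \<le> Y k w"
    and q: "0 \<le> q" "q \<le> 1"
    and step: "\<And>k w. X (Suc k) w \<le> q * X k w + (1-q) * Y k w"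
    and init: "(\<integral>\<^sup>+ w. X 0 w \<partial>M) \<le> ennreal x0" and "0 \<le> x0"
    and noise: "\<And>k. (\<integral>\<^sup>+ w. Y k w \<partial>M) \<le> ennreal c" and "0 \<le> c"
  shows "(\<integral>\<^sup>+ w. X k w \<partial>M) \<le> ennreal (q^k * x0 + c)"
proof (induction k)
  case 0
  have "ennreal x0 \<le> ennreal (q^0 * x0 + c)" using \<open>0 \<le> c\<close> by (intro ennreal_leI) simp
  with init show ?case by (rule order_trans)
next
  case (Suc k)
  have "ennreal (X (Suc k) w) \<le> ennreal q * X k w + ennreal (1-q) * Y k w" for w
  proof -
    have "ennreal (X (Suc k) w) \<le> ennreal (q * X k w + (1-q) * Y k w)"
      using step by (rule ennreal_leI)
    also have "\<dots> = ennreal q * X k w + ennreal (1-q) * Y k w"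
      using nonneg q by (simp add: ennreal_plus ennreal_mult)
    finally show ?thesis .
  qed
  then have "(\<integral>\<^sup>+ w. X (Suc k) w \<partial>M) \<le> (\<integral>\<^sup>+ w. ennreal q * X k w + ennreal (1-q) * Y k w \<partial>M)"
    by (intro nn_integral_mono)
  also have "\<dots> = ennreal q * (\<integral>\<^sup>+ w. X k w \<partial>M) + ennreal (1-q) * (\<integral>\<^sup>+ w. Y k w \<partial>M)"
    using X Y by (simp add: nn_integral_add nn_integral_cmult)
  also have "\<dots> \<le> ennreal q * ennreal (q^k * x0 + c) + ennreal (1-q) * ennreal c"
    using Suc.IH noise by (intro add_mono mult_left_mono) auto
  also have "\<dots> = ennreal (q * (q^k * x0 + c) + (1-q) * c)"
    using q \<open>0 \<le> x0\<close> \<open>0 \<le> c\<close> by (simp add: ennreal_plus ennreal_mult)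
  also have "q * (q^k * x0 + c) + (1-q) * c = q^Suc k * x0 + c"
    by (simp add: algebra_simps)
  finally show ?case .
qed

lemma std_gauss_density_total:
  fixes X :: "'w \<Rightarrow> real^'n"
  assumes "prob_space M" "distributed M lborel X (\<lambda>x. ennreal (std_gauss_density x))"
  shows "(\<integral>\<^sup>+ v. ennreal (std_gauss_density v) \<partial>(lborel :: (real^'n) measure)) = 1"
  using distributed_nn_integral[OF assms(2), of "\<lambda>_. 1"] prob_space.emeasure_space_1[OF assms(1)]
  by simp

lemma nn_integral_exp_neg_quarter_finite:
  assumes total: "(\<integral>\<^sup>+ v. ennreal (std_gauss_density v) \<partial>(lborel :: (real^'n) measure)) = 1"
  shows "(\<integral>\<^sup>+ v. ennreal (exp (-(v \<bullet> v)/4)) \<partial>(lborel :: (real^'n) measure)) < \<infinity>"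
proof -
  define c0 :: real where "c0 = (2*pi) powr (- real CARD('n) / 2)"
  have "(\<lambda>v::real^'n. ennreal (std_gauss_density v)) = (\<lambda>v. ennreal c0 * ennreal (exp (-(v \<bullet> v)/2)))"
    by (simp add: fun_eq_iff std_gauss_density_def c0_def power2_norm_eq_inner ennreal_mult)
  then have "ennreal c0 * (\<integral>\<^sup>+ v. ennreal (exp (-(v \<bullet> v)/2)) \<partial>(lborel :: (real^'n) measure)) = 1"
    using total by (simp add: nn_integral_cmult)
  then have half: "(\<integral>\<^sup>+ v. ennreal (exp (-(v \<bullet> v)/2)) \<partial>(lborel :: (real^'n) measure)) < \<infinity>"
    by (auto simp: top.not_eq_extremum[symmetric] c0_def ennreal_mult_top)
  define T where "T = (\<lambda>x::real^'n. 0 + sqrt 2 *\<^sub>R x)"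
  define c where "c = \<bar>sqrt 2\<bar> ^ DIM(real^'n)"
  have "lborel = density (distr lborel borel T) (\<lambda>_. ennreal c)"
    unfolding T_def c_def by (rule lborel_affine) simp
  then have "(\<integral>\<^sup>+ v. ennreal (exp (-(v \<bullet> v)/4)) \<partial>(lborel :: (real^'n) measure))
     = (\<integral>\<^sup>+ v. ennreal (exp (-(v \<bullet> v)/4)) \<partial>(density (distr lborel borel T) (\<lambda>_. ennreal c)))"
    by simp
  also have "\<dots> = (\<integral>\<^sup>+ v. ennreal c * ennreal (exp (-(v \<bullet> v)/4)) \<partial>(distr lborel borel T))"
    by (subst nn_integral_density) auto
  also have "\<dots> = (\<integral>\<^sup>+ x. ennreal c * ennreal (exp (-(T x \<bullet> T x)/4)) \<partial>(lborel :: (real^'n) measure))"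
    unfolding T_def by (subst nn_integral_distr) auto
  also have "\<dots> = (\<integral>\<^sup>+ x. ennreal c * ennreal (exp (-(x \<bullet> x)/2)) \<partial>(lborel :: (real^'n) measure))"
  proof -
    have sqrt2: "sqrt 2 * (sqrt 2 * a) = 2*a" for a :: real by (simp add: mult.assoc[symmetric])
    show ?thesis unfolding T_def by (intro nn_integral_cong) (simp add: sqrt2)
  qed
  also have "\<dots> = ennreal c * (\<integral>\<^sup>+ x. ennreal (exp (-(x \<bullet> x)/2)) \<partial>(lborel :: (real^'n) measure))"
    by (rule nn_integral_cmult) simp
  also have "\<dots> < \<infinity>" using half by (simp add: ennreal_mult_less_top)
  finally show ?thesis .
qed

lemma std_gauss_polynomial_moment_finite:
  assumes total: "(\<integral>\<^sup>+ v. ennreal (std_gauss_density v) \<partial>(lborel :: (real^'n) measure)) = 1"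
    and "0 \<le> b" "0 \<le> e"
  shows "(\<integral>\<^sup>+ v. ennreal (std_gauss_density v * (b + e*(v \<bullet> v))^N)
            \<partial>(lborel :: (real^'n) measure)) < \<infinity>"
proof -
  define C where "C = (2*pi) powr (- real CARD('n) / 2) * (b + 4*N*e + 1)^N"
  have pointwise: "std_gauss_density v * (b + e*(v \<bullet> v))^N \<le> C * exp (-(v \<bullet> v)/4)"
    for v :: "real^'n"
  proof -
    have "std_gauss_density v * (b + e*(v \<bullet> v))^N
        \<le> std_gauss_density v * ((b + 4*N*e + 1)^N * exp ((v \<bullet> v)/4))"
      using affine_power_le_exp[OF assms(2,3), of "v \<bullet> v" N]
      by (intro mult_left_mono) (auto simp: std_gauss_density_def)
    also have "\<dots> = C * (exp (-(v \<bullet> v)/2) * exp ((v \<bullet> v)/4))"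
      by (simp add: std_gauss_density_def C_def power2_norm_eq_inner)
    also have "exp (-(v \<bullet> v)/2) * exp ((v \<bullet> v)/4) = exp (-(v \<bullet> v)/4)"
      by (simp flip: exp_add)
    finally show ?thesis .
  qed
  have C: "0 \<le> C" using assms(2,3) by (simp add: C_def)
  have "ennreal (std_gauss_density v * (b + e*(v \<bullet> v))^N) \<le> ennreal C * ennreal (exp (-(v \<bullet> v)/4))"
    for v :: "real^'n"
    using pointwise[of v] C by (simp add: ennreal_leI flip: ennreal_mult)
  then have "(\<integral>\<^sup>+ v. ennreal (std_gauss_density v * (b + e*(v \<bullet> v))^N) \<partial>(lborel :: (real^'n) measure))
      \<le> (\<integral>\<^sup>+ v. ennreal C * ennreal (exp (-(v \<bullet> v)/4)) \<partial>(lborel :: (real^'n) measure))"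
    by (intro nn_integral_mono)
  also have "\<dots> < \<infinity>"
    using nn_integral_exp_neg_quarter_finite[OF total]
    by (simp add: nn_integral_cmult ennreal_mult_less_top)
  finally show ?thesis .
qed
lemma borel_measurable_ula:
  fixes g :: "real^'n \<Rightarrow> real^'n" and \<eta> :: "nat \<Rightarrow> 'w \<Rightarrow> real^'n"
  assumes [measurable]: "g \<in> borel_measurable borel" "\<And>k. \<eta> k \<in> borel_measurable M"
  shows "(\<lambda>w. fst (ula \<gamma> \<delta> g x0 p0 \<eta> k w)) \<in> borel_measurable M"
    and "(\<lambda>w. snd (ula \<gamma> \<delta> g x0 p0 \<eta> k w)) \<in> borel_measurable M"
proof -
  have "(\<lambda>w. fst (ula \<gamma> \<delta> g x0 p0 \<eta> k w)) \<in> borel_measurable M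
      \<and> (\<lambda>w. snd (ula \<gamma> \<delta> g x0 p0 \<eta> k w)) \<in> borel_measurable M"
  proof (induction k)
    case (Suc k)
    then have [measurable]: "(\<lambda>w. fst (ula \<gamma> \<delta> g x0 p0 \<eta> k w)) \<in> borel_measurable M"
      "(\<lambda>w. snd (ula \<gamma> \<delta> g x0 p0 \<eta> k w)) \<in> borel_measurable M" by auto
    show ?case by (simp add: Let_def)
  qed simp
  then show "(\<lambda>w. fst (ula \<gamma> \<delta> g x0 p0 \<eta> k w)) \<in> borel_measurable M"
    and "(\<lambda>w. snd (ula \<gamma> \<delta> g x0 p0 \<eta> k w)) \<in> borel_measurable M" by auto
qed

lemma borel_measurable_lyapunov_ula:
  fixes V :: "real^'n \<Rightarrow> real" and \<eta> :: "nat \<Rightarrow> 'w \<Rightarrow> real^'n"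
  assumes "langevin_potential V gradV H \<gamma> \<nu> \<alpha> \<beta>" and [measurable]: "\<And>k. \<eta> k \<in> borel_measurable M"
  shows "(\<lambda>w. lyapunov V \<gamma> (fst (ula \<gamma> \<delta> gradV x0 p0 \<eta> k w)) (snd (ula \<gamma> \<delta> gradV x0 p0 \<eta> k w)))
    \<in> borel_measurable M"
proof -
  interpret langevin_potential V gradV H \<gamma> \<nu> \<alpha> \<beta> by fact
  have [measurable]: "V \<in> borel_measurable borel" "gradV \<in> borel_measurable borel"
    using V_continuous gradV_continuous by (auto intro: borel_measurable_continuous_onI)
  note [measurable] = borel_measurable_ula
  show ?thesis unfolding lyapunov_def by measurable
qed

lemma ula_lyapunov_moment_le:
  fixes V :: "real^'n \<Rightarrow> real"
  assumes potential: "langevin_potential V gradV H \<gamma> \<nu> \<alpha> \<beta>"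
    and ok: "step_ok \<gamma> \<nu> \<beta> \<delta>" and N: "even N"
  obtains q c where "0 < q" "q < 1" "0 \<le> c"
    "\<And>(M :: 'w measure) (\<eta> :: nat \<Rightarrow> 'w \<Rightarrow> real^'n) x0 p0 k. prob_space M \<Longrightarrow>
       (\<And>k. distributed M lborel (\<eta> k) (\<lambda>x. ennreal (std_gauss_density x))) \<Longrightarrow>
       (\<integral>\<^sup>+ w. ennreal (lyapunov V \<gamma> (fst (ula \<gamma> \<delta> gradV x0 p0 \<eta> k w))
                                      (snd (ula \<gamma> \<delta> gradV x0 p0 \<eta> k w)) ^ N) \<partial>M)
       \<le> ennreal (q^k * lyapunov V \<gamma> x0 p0 ^ N + c)"
proof -
  interpret langevin_potential V gradV H \<gamma> \<nu> \<alpha> \<beta> by (fact potential)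
  obtain q b e where q: "0 < q" "q < 1" and be: "0 \<le> b" "0 \<le> e"
    and step: "\<And>x p z. lyapunov V \<gamma> (x + \<delta> *\<^sub>R p)
        ((1 - \<gamma>*\<delta>) *\<^sub>R p - \<delta> *\<^sub>R gradV x + sqrt (2*\<gamma>*\<delta>) *\<^sub>R z) ^ N
       \<le> q * lyapunov V \<gamma> x p ^ N + (1-q) * (b + e * (z \<bullet> z))^N"
    using lyapunov_power_step[OF ok N] by blast
  define Y where "Y v = (b + e * (v \<bullet> v))^N" for v :: "real^'n"
  have Y_nonneg: "0 \<le> Y v" for v using be by (simp add: Y_def)
  define c where "c = enn2real (\<integral>\<^sup>+ v. ennreal (std_gauss_density v * Y v) \<partial>(lborel :: (real^'n) measure))"
  show thesis
  proof (rule that[OF q])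
    show "0 \<le> c" by (simp add: c_def)
  next
    fix M :: "'w measure" and \<eta> :: "nat \<Rightarrow> 'w \<Rightarrow> real^'n" and x0 p0 k
    assume P: "prob_space M"
      and D: "\<And>k. distributed M lborel (\<eta> k) (\<lambda>x. ennreal (std_gauss_density x))"
    have [measurable]: "\<eta> k \<in> borel_measurable M" for k
      using D distributed_measurable measurable_lborel1 by blast
    have [measurable]: "Y \<in> borel_measurable borel" unfolding Y_def by measurable
    have "(\<integral>\<^sup>+ v. ennreal (std_gauss_density v * Y v) \<partial>(lborel :: (real^'n) measure)) < \<infinity>"
      using std_gauss_polynomial_moment_finite[OF std_gauss_density_total[OF P D[of 0]] be]
      by (simp add: Y_def)
    then have "(\<integral>\<^sup>+ v. ennreal (std_gauss_density v) * ennreal (Y v) \<partial>lborel) = ennreal c"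
      using Y_nonneg by (simp add: c_def ennreal_mult std_gauss_density_def)
    then have noise: "(\<integral>\<^sup>+ w. ennreal (Y (\<eta> k w)) \<partial>M) = ennreal c" for k
      using distributed_nn_integral[OF D, of Y] by simp
    define L where "L k w = lyapunov V \<gamma> (fst (ula \<gamma> \<delta> gradV x0 p0 \<eta> k w))
                                      (snd (ula \<gamma> \<delta> gradV x0 p0 \<eta> k w)) ^ N" for k w
    have "(\<integral>\<^sup>+ w. ennreal (L k w) \<partial>M) \<le> ennreal (q^k * lyapunov V \<gamma> x0 p0 ^ N + c)"
    proof (rule nn_integral_convex_recursion_le)
      show "\<And>k. L k \<in> borel_measurable M"
        using borel_measurable_lyapunov_ula[OF potential] unfolding L_def by measurable
      show "\<And>k w. 0 \<le> L k w" unfolding L_def using lyapunov_nonneg[where V=V, OF V_nonneg] by simp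
      show "\<And>k w. L (Suc k) w \<le> q * L k w + (1-q) * Y (\<eta> k w)"
        unfolding L_def Y_def using step by (simp add: Let_def)
      show "(\<integral>\<^sup>+ w. ennreal (L 0 w) \<partial>M) \<le> ennreal (lyapunov V \<gamma> x0 p0 ^ N)"
        using P by (simp add: L_def prob_space.emeasure_space_1)
    qed (use q c_def noise Y_nonneg lyapunov_nonneg[where V=V, OF V_nonneg] in auto)
    then show "(\<integral>\<^sup>+ w. ennreal (lyapunov V \<gamma> (fst (ula \<gamma> \<delta> gradV x0 p0 \<eta> k w))
                                      (snd (ula \<gamma> \<delta> gradV x0 p0 \<eta> k w)) ^ N) \<partial>M)
       \<le> ennreal (q^k * lyapunov V \<gamma> x0 p0 ^ N + c)"
      by (simp add: L_def)
  qed
qed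

lemma ula_moments_le_lyapunov_moment:
  fixes V :: "real^'n \<Rightarrow> real" and \<eta> :: "nat \<Rightarrow> 'w \<Rightarrow> real^'n"
  assumes potential: "langevin_potential V gradV H \<gamma> \<nu> \<alpha> \<beta>" and P: "prob_space M"
    and \<eta>: "\<And>k. \<eta> k \<in> borel_measurable M" and l: "0 < l" "l \<le> real N"
  shows "(\<integral>\<^sup>+ w. ennreal (norm (fst (ula \<gamma> \<delta> gradV x0 p0 \<eta> k w)) powr (2*l)
                          + norm (snd (ula \<gamma> \<delta> gradV x0 p0 \<eta> k w)) powr (2*l)) \<partial>M)
    \<le> 2 + ennreal (2 * max (8/\<gamma>^2) 4 ^ N) * (\<integral>\<^sup>+ w. ennreal (lyapunov V \<gamma>
          (fst (ula \<gamma> \<delta> gradV x0 p0 \<eta> k w)) (snd (ula \<gamma> \<delta> gradV x0 p0 \<eta> k w)) ^ N) \<partial>M)"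
proof -
  interpret langevin_potential V gradV H \<gamma> \<nu> \<alpha> \<beta> by (fact potential)
  define a where "a = 2 * max (8/\<gamma>^2) 4 ^ N"
  define L where "L w = lyapunov V \<gamma> (fst (ula \<gamma> \<delta> gradV x0 p0 \<eta> k w))
                                 (snd (ula \<gamma> \<delta> gradV x0 p0 \<eta> k w)) ^ N" for w
  have L_nonneg: "0 \<le> L w" for w
    unfolding L_def using lyapunov_nonneg[where V=V, OF V_nonneg] by simp
  have "ennreal (norm (fst (ula \<gamma> \<delta> gradV x0 p0 \<eta> k w)) powr (2*l)
                + norm (snd (ula \<gamma> \<delta> gradV x0 p0 \<eta> k w)) powr (2*l)) \<le> ennreal (2 + a * L w)" for w
    using power_norms_le_lyapunov_power[where V=V, OF V_nonneg gamma_pos l]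
    by (intro ennreal_leI) (simp add: L_def a_def mult.assoc)
  also have "ennreal (2 + a * L w) = 2 + ennreal a * ennreal (L w)" for w
    using L_nonneg[of w] by (simp add: a_def ennreal_plus ennreal_mult)
  finally have "(\<integral>\<^sup>+ w. ennreal (norm (fst (ula \<gamma> \<delta> gradV x0 p0 \<eta> k w)) powr (2*l)
                          + norm (snd (ula \<gamma> \<delta> gradV x0 p0 \<eta> k w)) powr (2*l)) \<partial>M)
      \<le> (\<integral>\<^sup>+ w. 2 + ennreal a * ennreal (L w) \<partial>M)"
    by (intro nn_integral_mono)
  also have "\<dots> = 2 + ennreal a * (\<integral>\<^sup>+ w. ennreal (L w) \<partial>M)"
    using borel_measurable_lyapunov_ula[OF potential \<eta>] P unfolding L_def
    by (simp add: nn_integral_add nn_integral_cmult prob_space.emeasure_space_1)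
  finally show ?thesis unfolding a_def L_def .
qed

lemma ula_moment_bound:
  fixes V :: "real^'n \<Rightarrow> real"
  assumes potential: "langevin_potential V gradV H \<gamma> \<nu> \<alpha> \<beta>" and ok: "step_ok \<gamma> \<nu> \<beta> \<delta>"
    and N: "even N" and l: "0 < l" "l \<le> real N"
  shows "\<exists>C>0. \<exists>lam>0. \<forall>(M :: 'w measure) (\<eta> :: nat \<Rightarrow> 'w \<Rightarrow> real^'n) x0 p0.
           prob_space M \<longrightarrow>
           (\<forall>k. distributed M lborel (\<eta> k) (\<lambda>x. ennreal (std_gauss_density x))) \<longrightarrow>
           (\<forall>k::nat.
              (\<integral>\<^sup>+ w. ennreal (norm (fst (ula \<gamma> \<delta> gradV x0 p0 \<eta> k w)) powr (2*l)
                           + norm (snd (ula \<gamma> \<delta> gradV x0 p0 \<eta> k w)) powr (2*l)) \<partial>M)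
              \<le> ennreal (C * (1 + (norm x0 ^ (2*N) + norm p0 ^ (2*N)) * exp (- lam * real k))))"
proof -
  interpret langevin_potential V gradV H \<gamma> \<nu> \<alpha> \<beta> by (fact potential)
  obtain q c where q: "0 < q" "q < 1" and c: "0 \<le> c"
    and moment: "\<And>(M :: 'w measure) (\<eta> :: nat \<Rightarrow> 'w \<Rightarrow> real^'n) x0 p0 k. prob_space M \<Longrightarrow>
       (\<And>k. distributed M lborel (\<eta> k) (\<lambda>x. ennreal (std_gauss_density x))) \<Longrightarrow>
       (\<integral>\<^sup>+ w. ennreal (lyapunov V \<gamma> (fst (ula \<gamma> \<delta> gradV x0 p0 \<eta> k w))
                                      (snd (ula \<gamma> \<delta> gradV x0 p0 \<eta> k w)) ^ N) \<partial>M)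
       \<le> ennreal (q^k * lyapunov V \<gamma> x0 p0 ^ N + c)"
    using ula_lyapunov_moment_le[OF potential ok N] by blast
  obtain K where K: "K \<ge> 0" "\<And>x p. lyapunov V \<gamma> x p ^ N \<le> K * (1 + norm x ^ (2*N) + norm p ^ (2*N))"
    using lyapunov_power_le by blast
  define a where "a = 2 * max (8/\<gamma>^2) 4 ^ N"
  have a: "0 < a" by (simp add: a_def)
  define C where "C = 2 + a * c + a * K"
  define lam where "lam = - ln q"
  have "C > 0" "lam > 0" using a c K q by (simp_all add: C_def lam_def add_pos_nonneg)
  moreover have "(\<integral>\<^sup>+ w. ennreal (norm (fst (ula \<gamma> \<delta> gradV x0 p0 \<eta> k w)) powr (2*l)
                           + norm (snd (ula \<gamma> \<delta> gradV x0 p0 \<eta> k w)) powr (2*l)) \<partial>M)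
              \<le> ennreal (C * (1 + (norm x0 ^ (2*N) + norm p0 ^ (2*N)) * exp (- lam * real k)))"
    if P: "prob_space M"
      and D: "\<forall>k. distributed M lborel (\<eta> k) (\<lambda>x. ennreal (std_gauss_density x))"
    for M :: "'w measure" and \<eta> :: "nat \<Rightarrow> 'w \<Rightarrow> real^'n" and x0 p0 k
  proof -
    define L0 where "L0 = lyapunov V \<gamma> x0 p0 ^ N"
    define Z where "Z = norm x0 ^ (2*N) + norm p0 ^ (2*N)"
    have \<eta>: "\<eta> k \<in> borel_measurable M" for k
      using D distributed_measurable measurable_lborel1 by blast
    have qk: "0 \<le> q^k" "q^k \<le> 1" "exp (- lam * real k) = q^k"
      using q by (simp_all add: power_le_one lam_def exp_of_nat2_mult)
    have "2 + a * (q^k * L0 + c) \<le> C * (1 + Z * q^k)"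
      unfolding C_def using a c K qk K(2)[of x0 p0]
      by (intro constant_plus_decay_le) (simp_all add: L0_def Z_def add.assoc)
    then have bound: "ennreal (2 + a * (q^k * L0 + c)) \<le> ennreal (C * (1 + Z * exp (- lam * real k)))"
      unfolding qk(3) by (rule ennreal_leI)
    have "(\<integral>\<^sup>+ w. ennreal (norm (fst (ula \<gamma> \<delta> gradV x0 p0 \<eta> k w)) powr (2*l)
                           + norm (snd (ula \<gamma> \<delta> gradV x0 p0 \<eta> k w)) powr (2*l)) \<partial>M)
        \<le> 2 + ennreal a * ennreal (q^k * L0 + c)"
      unfolding L0_def
      by (rule order_trans[OF ula_moments_le_lyapunov_moment[where \<eta>=\<eta>,
            OF potential P \<eta> l, of \<delta> x0 p0 k, folded a_def]])
        (intro add_left_mono mult_left_mono moment[OF P D[rule_format]]; simp)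
    also have "\<dots> = ennreal (2 + a * (q^k * L0 + c))"
      using a c qk lyapunov_nonneg[where V=V, OF V_nonneg] by (simp add: L0_def ennreal_plus ennreal_mult)
    finally show ?thesis using bound unfolding Z_def by simp
  qed
  ultimately show ?thesis by blast
qed

theorem theorem1:
  fixes V :: "real^'n \<Rightarrow> real" and gradV :: "real^'n \<Rightarrow> real^'n"
    and H :: "real^'n \<Rightarrow> real^'n \<Rightarrow> real^'n"
    and \<gamma> \<nu> \<alpha> \<beta> :: real
  assumes gamma_pos: "\<gamma> > 0"
    and grad: "\<And>x. (V has_derivative (\<lambda>h. gradV x \<bullet> h)) (at x)"
    and hess: "\<And>x. (gradV has_derivative H x) (at x)"
    and A1a: "\<And>x. V x \<ge> 0"
    and nu_pos: "\<nu> > 0"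
    and A1b: "\<And>x. onorm (H x) \<le> \<nu>"
    and A1c: "Cinf_poly V"
    and alpha_pos: "\<alpha> > 0" and beta: "0 < \<beta>" "\<beta> < 1"
    and A2: "\<And>x. (1/2) * (gradV x \<bullet> x) \<ge> \<beta> * V x + \<gamma>^2 * C_beta \<beta> * (norm x)^2 - \<alpha>"
  shows "\<forall>l::real. l > 0 \<longrightarrow> (\<exists>m::nat. m > 0 \<and>
          (\<forall>\<delta>. step_ok \<gamma> \<nu> \<beta> \<delta> \<longrightarrow>
            (\<exists>C>0. \<exists>lam>0. \<forall>(M :: 'w measure) (\<eta> :: nat \<Rightarrow> 'w \<Rightarrow> real^'n) x0 p0.
               prob_space M \<longrightarrow>
               prob_space.indep_vars M (\<lambda>_. borel) \<eta> UNIV \<longrightarrow>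
               (\<forall>k. distributed M lborel (\<eta> k) (\<lambda>x. ennreal (std_gauss_density x))) \<longrightarrow>
               (\<forall>k::nat.
                  (\<integral>\<^sup>+ w. ennreal (norm (fst (ula \<gamma> \<delta> gradV x0 p0 \<eta> k w)) powr (2*l)
                               + norm (snd (ula \<gamma> \<delta> gradV x0 p0 \<eta> k w)) powr (2*l)) \<partial>M)
                  \<le> ennreal (C * (1 + (norm x0 ^ m + norm p0 ^ m) * exp (- lam * real k)))))))"
proof -
  have potential: "langevin_potential V gradV H \<gamma> \<nu> \<alpha> \<beta>"
    using gamma_pos grad hess A1a nu_pos A1b beta A2 by unfold_locales
  have N: "even (2 * nat \<lceil>l\<rceil>)" "l \<le> real (2 * nat \<lceil>l\<rceil>)" for l :: real
    by auto linarith
  show ?thesis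
    apply (intro allI impI)
    subgoal premises l for l
      apply (intro exI[of _ "2 * (2 * nat \<lceil>l\<rceil>)"] conjI allI impI)
      subgoal using l by simp
      subgoal premises ok for \<delta>
        using ula_moment_bound[OF potential ok N(1) l N(2)] by blast
      done
    done
qed

end
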